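(* Let $p$ be an odd prime. The functor $U$ from $\mathbb{Z}_{(p)}$-modules to discrete $A$-modules, $UL=\mathrm{Hom}^{\mathrm{cts}}_{\mathbb{Z}_{(p)}}(A,L)$, is exact and preserves direct sums and direct limits.
   Context: $A$ is the ring of degree zero stable operations in $p$-local complex $K$-theory. Fix $q$ primitive mod $p^2$, $\Psi^q\in A$ the Adams operation, $q_i=q^{(-1)^i\lfloor i/2\rfloor}$, $\Theta_n(X)=\prod_{i=1}^n(X-q_i)$, $\Phi_n=\Theta_n(\Psi^q)$; every element of $A$ is uniquely a convergent sum $\sum_{n\ge0}a_n\Phi_n$ with $a_n\in\mathbb{Z}_{(p)}$, and $A_m=\{\sum_{n\ge m}a_n\Phi_n\}$. An $A$-module $M$ is discrete if each $x\in M$ satisfies $A_nx=0$ for some $n$. $\mathrm{Hom}^{\mathrm{cts}}_{\mathbb{Z}_{(p)}}(A,L)$ is the set of $\mathbb{Z}_{(p)}$-homomorphisms $A\to L$ whose kernel contains some $A_n$, an $A$-module via $(af)(t)=f(ta)$. *)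

theory Defs
  imports "HOL-Algebra.Module" "HOL-Computational_Algebra.Polynomial"
          "HOL-Number_Theory.Residue_Primitive_Roots"
begin

definition Zp_set :: "nat \<Rightarrow> rat set" where
  "Zp_set p = {r. \<not> int p dvd snd (quotient_of r)}"

definition Zp_ring :: "nat \<Rightarrow> rat ring" where
  "Zp_ring p = \<lparr>carrier = Zp_set p, mult = (*), one = 1, zero = 0, add = (+)\<rparr>"

section \<open>The ring A of degree zero stable operations\<close>

text \<open>The numbers q_i = q^((-1)^i * floor(i/2)) (as rationals), the polynomials
  Theta_n(X) = prod_{i=1..n} (X - q_i), and the expansion coefficients of a polynomial
  in the basis Theta_0, Theta_1, ... (Newton expansion with nodes q_1, q_2, ...).\<close>

definition qi :: "int \<Rightarrow> nat \<Rightarrow> rat" where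
  "qi q i = of_int q powi ((-1) ^ i * int (i div 2))"

definition Theta :: "int \<Rightarrow> nat \<Rightarrow> rat poly" where
  "Theta q n = (\<Prod>i\<in>{1..n}. [:- qi q i, 1:])"

fun newton_rem :: "int \<Rightarrow> rat poly \<Rightarrow> nat \<Rightarrow> rat poly" where
  "newton_rem q P 0 = P"
| "newton_rem q P (Suc k) = newton_rem q P k div [:- qi q (Suc k), 1:]"

definition theta_coeff :: "int \<Rightarrow> rat poly \<Rightarrow> nat \<Rightarrow> rat" where
  "theta_coeff q P k = poly (newton_rem q P k) (qi q (Suc k))"

text \<open>An element sum_n a_n Phi_n of A is represented by its coefficient sequence a.
  The product is the continuous extension of Phi_m Phi_n = (Theta_m Theta_n)(Psi^q);
  only Phi_k with max m n <= k <= m + n occur in it.\<close>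
definition A_mult :: "int \<Rightarrow> (nat \<Rightarrow> rat) \<Rightarrow> (nat \<Rightarrow> rat) \<Rightarrow> (nat \<Rightarrow> rat)" where
  "A_mult q a b = (\<lambda>k. \<Sum>m\<le>k. \<Sum>n\<le>k. a m * b n * theta_coeff q (Theta q m * Theta q n) k)"

definition A_ring :: "nat \<Rightarrow> int \<Rightarrow> (nat \<Rightarrow> rat) ring" where
  "A_ring p q = \<lparr>carrier = {a. \<forall>n. a n \<in> Zp_set p}, mult = A_mult q,
     one = (\<lambda>n. if n = 0 then 1 else 0), zero = (\<lambda>n. 0), add = (\<lambda>a b n. a n + b n)\<rparr>"

definition A_filt :: "nat \<Rightarrow> int \<Rightarrow> nat \<Rightarrow> (nat \<Rightarrow> rat) set" where
  "A_filt p q m = {a \<in> carrier (A_ring p q). \<forall>n<m. a n = 0}"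

definition A_scal :: "rat \<Rightarrow> (nat \<Rightarrow> rat) \<Rightarrow> (nat \<Rightarrow> rat)" where
  "A_scal r a = (\<lambda>n. r * a n)"

definition mod_hom :: "('r, 'c) ring_scheme \<Rightarrow> ('r, 'a, 'd) module_scheme \<Rightarrow> ('r, 'b, 'e) module_scheme
     \<Rightarrow> ('a \<Rightarrow> 'b) set" where
  "mod_hom R M N = {f. f \<in> carrier M \<rightarrow> carrier N
     \<and> (\<forall>x\<in>carrier M. \<forall>y\<in>carrier M. f (x \<oplus>\<^bsub>M\<^esub> y) = f x \<oplus>\<^bsub>N\<^esub> f y)
     \<and> (\<forall>r\<in>carrier R. \<forall>x\<in>carrier M. f (r \<odot>\<^bsub>M\<^esub> x) = r \<odot>\<^bsub>N\<^esub> f x)}"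

text \<open>Hom^cts_{Z_(p)}(A, L): Z_(p)-linear maps A -> L whose kernel contains some A_n
  (represented as functions extensional on the carrier of A).\<close>
definition U_carrier :: "nat \<Rightarrow> int \<Rightarrow> (rat, 'a) module \<Rightarrow> ((nat \<Rightarrow> rat) \<Rightarrow> 'a) set" where
  "U_carrier p q L = {f \<in> extensional (carrier (A_ring p q)).
       f \<in> carrier (A_ring p q) \<rightarrow> carrier L
     \<and> (\<forall>a\<in>carrier (A_ring p q). \<forall>b\<in>carrier (A_ring p q).
          f (a \<oplus>\<^bsub>A_ring p q\<^esub> b) = f a \<oplus>\<^bsub>L\<^esub> f b)
     \<and> (\<forall>r\<in>Zp_set p. \<forall>a\<in>carrier (A_ring p q). f (A_scal r a) = r \<odot>\<^bsub>L\<^esub> f a)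
     \<and> (\<exists>n. \<forall>a\<in>A_filt p q n. f a = \<zero>\<^bsub>L\<^esub>)}"

text \<open>U L as an A-module, with (a f)(t) = f(t a).  (The ring-multiplication fields of the
  module record are irrelevant and left undefined.)\<close>
definition U :: "nat \<Rightarrow> int \<Rightarrow> (rat, 'a) module \<Rightarrow> (nat \<Rightarrow> rat, (nat \<Rightarrow> rat) \<Rightarrow> 'a) module" where
  "U p q L = \<lparr>carrier = U_carrier p q L, mult = (\<lambda>_ _. undefined), one = undefined,
     zero = (\<lambda>t\<in>carrier (A_ring p q). \<zero>\<^bsub>L\<^esub>),
     add = (\<lambda>f g. \<lambda>t\<in>carrier (A_ring p q). f t \<oplus>\<^bsub>L\<^esub> g t),
     smult = (\<lambda>a f. \<lambda>t\<in>carrier (A_ring p q). f (t \<otimes>\<^bsub>A_ring p q\<^esub> a))\<rparr>"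

definition Umap :: "nat \<Rightarrow> int \<Rightarrow> ('a \<Rightarrow> 'b) \<Rightarrow> ((nat \<Rightarrow> rat) \<Rightarrow> 'a) \<Rightarrow> ((nat \<Rightarrow> rat) \<Rightarrow> 'b)" where
  "Umap p q f = (\<lambda>\<phi>. \<lambda>t\<in>carrier (A_ring p q). f (\<phi> t))"

definition dsum :: "'i set \<Rightarrow> ('i \<Rightarrow> ('r, 'a) module) \<Rightarrow> ('r, 'i \<Rightarrow> 'a) module" where
  "dsum I L = \<lparr>carrier = {x \<in> Pi\<^sub>E I (\<lambda>i. carrier (L i)). finite {i\<in>I. x i \<noteq> \<zero>\<^bsub>L i\<^esub>}},
     mult = (\<lambda>_ _. undefined), one = undefined,
     zero = (\<lambda>i\<in>I. \<zero>\<^bsub>L i\<^esub>),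
     add = (\<lambda>x y. \<lambda>i\<in>I. x i \<oplus>\<^bsub>L i\<^esub> y i),
     smult = (\<lambda>r x. \<lambda>i\<in>I. r \<odot>\<^bsub>L i\<^esub> x i)\<rparr>"

definition dir_system :: "('r, 'c) ring_scheme \<Rightarrow> 'i set \<Rightarrow> ('i \<Rightarrow> 'i \<Rightarrow> bool)
    \<Rightarrow> ('i \<Rightarrow> ('r, 'a) module) \<Rightarrow> ('i \<Rightarrow> 'i \<Rightarrow> 'a \<Rightarrow> 'a) \<Rightarrow> bool" where
  "dir_system R I leq L \<phi> \<longleftrightarrow>
     I \<noteq> {}
   \<and> (\<forall>i\<in>I. leq i i)
   \<and> (\<forall>i\<in>I. \<forall>j\<in>I. \<forall>k\<in>I. leq i j \<longrightarrow> leq j k \<longrightarrow> leq i k)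
   \<and> (\<forall>i\<in>I. \<forall>j\<in>I. \<exists>k\<in>I. leq i k \<and> leq j k)
   \<and> (\<forall>i\<in>I. module R (L i))
   \<and> (\<forall>i\<in>I. \<forall>j\<in>I. leq i j \<longrightarrow> \<phi> i j \<in> mod_hom R (L i) (L j))
   \<and> (\<forall>i\<in>I. \<forall>x\<in>carrier (L i). \<phi> i i x = x)
   \<and> (\<forall>i\<in>I. \<forall>j\<in>I. \<forall>k\<in>I. leq i j \<longrightarrow> leq j k \<longrightarrow>
        (\<forall>x\<in>carrier (L i). \<phi> j k (\<phi> i j x) = \<phi> i k x))"

definition dl_rel :: "'i set \<Rightarrow> ('i \<Rightarrow> 'i \<Rightarrow> bool) \<Rightarrow> ('i \<Rightarrow> ('r, 'a) module)
    \<Rightarrow> ('i \<Rightarrow> 'i \<Rightarrow> 'a \<Rightarrow> 'a) \<Rightarrow> (('i \<times> 'a) \<times> ('i \<times> 'a)) set" where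
  "dl_rel I leq L \<phi> = {((i, x), (j, y)). i \<in> I \<and> j \<in> I \<and> x \<in> carrier (L i) \<and> y \<in> carrier (L j)
      \<and> (\<exists>k\<in>I. leq i k \<and> leq j k \<and> \<phi> i k x = \<phi> j k y)}"

definition dl_in :: "'i set \<Rightarrow> ('i \<Rightarrow> 'i \<Rightarrow> bool) \<Rightarrow> ('i \<Rightarrow> ('r, 'a) module)
    \<Rightarrow> ('i \<Rightarrow> 'i \<Rightarrow> 'a \<Rightarrow> 'a) \<Rightarrow> 'i \<Rightarrow> 'a \<Rightarrow> ('i \<times> 'a) set" where
  "dl_in I leq L \<phi> i x = dl_rel I leq L \<phi> `` {(i, x)}"

definition dirlim :: "'i set \<Rightarrow> ('i \<Rightarrow> 'i \<Rightarrow> bool) \<Rightarrow> ('i \<Rightarrow> ('r, 'a) module)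
    \<Rightarrow> ('i \<Rightarrow> 'i \<Rightarrow> 'a \<Rightarrow> 'a) \<Rightarrow> ('r, ('i \<times> 'a) set) module" where
  "dirlim I leq L \<phi> = \<lparr>carrier = (SIGMA i:I. carrier (L i)) // dl_rel I leq L \<phi>,
     mult = (\<lambda>_ _. undefined), one = undefined,
     zero = (let i = (SOME i. i \<in> I) in dl_in I leq L \<phi> i \<zero>\<^bsub>L i\<^esub>),
     add = (\<lambda>X Y. SOME Z. \<exists>i x j y k. (i, x) \<in> X \<and> (j, y) \<in> Y \<and> k \<in> I \<and> leq i k \<and> leq j k
              \<and> Z = dl_in I leq L \<phi> k (\<phi> i k x \<oplus>\<^bsub>L k\<^esub> \<phi> j k y)),
     smult = (\<lambda>r X. SOME Z. \<exists>i x. (i, x) \<in> X \<and> Z = dl_in I leq L \<phi> i (r \<odot>\<^bsub>L i\<^esub> x))\<rparr>"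

definition dl_can :: "nat \<Rightarrow> int \<Rightarrow> 'i set \<Rightarrow> ('i \<Rightarrow> 'i \<Rightarrow> bool) \<Rightarrow> ('i \<Rightarrow> (rat, 'a) module)
    \<Rightarrow> ('i \<Rightarrow> 'i \<Rightarrow> 'a \<Rightarrow> 'a) \<Rightarrow> ('i \<times> ((nat \<Rightarrow> rat) \<Rightarrow> 'a)) set \<Rightarrow> ((nat \<Rightarrow> rat) \<Rightarrow> ('i \<times> 'a) set)" where
  "dl_can p q I leq L \<phi> X = (case SOME ix. ix \<in> X of (i, f) \<Rightarrow>
      (\<lambda>t\<in>carrier (A_ring p q). dl_in I leq L \<phi> i (f t)))"

end

theory Submission
  imports Defs
begin

text \<open>As a module over the p-local integers, A is the product of copies of Z_(p) indexed by
  the basis Phi_0, Phi_1, ..., and A_n is the subproduct over the indices n' >= n.  A homomorphism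
  A -> L killing A_n is therefore determined by its values on Phi_0, ..., Phi_(n-1), and these
  values can be prescribed arbitrarily.  Hence U L is naturally the direct sum of countably many
  copies of L, and exactness and compatibility with direct sums and direct limits follow
  coordinatewise; for direct limits one uses that finitely many elements, and finitely many
  equations between them, are already realised at a single stage.  Only the module structure
  of A enters.\<close>

lemma Zp_set_iff_fraction:
  "r \<in> Zp_set p \<longleftrightarrow> (\<exists>a b. b > 0 \<and> \<not> int p dvd b \<and> r = of_int a / of_int b)"
proof
  assume "r \<in> Zp_set p"
  then show "\<exists>a b. b > 0 \<and> \<not> int p dvd b \<and> r = of_int a / of_int b"
    unfolding Zp_set_def
    by (metis (mono_tags, lifting) mem_Collect_eq prod.collapse quotient_of_denom_pos' quotient_of_div)
next
  assume "\<exists>a b. b > 0 \<and> \<not> int p dvd b \<and> r = of_int a / of_int b"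
  then obtain a b where ab: "b > 0" "\<not> int p dvd b" "r = of_int a / of_int b" by blast
  obtain a' b' where r: "quotient_of r = (a', b')" by (cases "quotient_of r")
  have b': "b' > 0" "coprime a' b'" "r = of_int a' / of_int b'"
    using r quotient_of_denom_pos quotient_of_coprime quotient_of_div by blast+
  with ab have "of_int (a * b') = (of_int (a' * b) :: rat)"
    by (simp add: field_simps)
  then have "b' dvd a' * b" by (metis dvd_triv_right of_int_eq_iff)
  then have "b' dvd b" using b'(2) by (metis coprime_commute coprime_dvd_mult_right_iff)
  then have "\<not> int p dvd b'" using ab(2) dvd_trans by blast
  then show "r \<in> Zp_set p" unfolding Zp_set_def using r by simp
qed

lemma Zp_set_add:
  assumes "prime p" "r \<in> Zp_set p" "s \<in> Zp_set p"
  shows "r + s \<in> Zp_set p"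
proof -
  obtain a b where ab: "b > 0" "\<not> int p dvd b" "r = of_int a / of_int b"
    using assms(2) Zp_set_iff_fraction by blast
  obtain c d where cd: "d > 0" "\<not> int p dvd d" "s = of_int c / of_int d"
    using assms(3) Zp_set_iff_fraction by blast
  have "r + s = of_int (a * d + c * b) / of_int (b * d)" using ab cd by (simp add: field_simps)
  moreover have "\<not> int p dvd b * d"
    using ab(2) cd(2) assms(1) by (simp add: prime_dvd_mult_iff)
  moreover have "b * d > 0" using ab(1) cd(1) by simp
  ultimately show ?thesis using Zp_set_iff_fraction by blast
qed

lemma Zp_set_mult:
  assumes "prime p" "r \<in> Zp_set p" "s \<in> Zp_set p"
  shows "r * s \<in> Zp_set p"
proof -
  obtain a b where ab: "b > 0" "\<not> int p dvd b" "r = of_int a / of_int b"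
    using assms(2) Zp_set_iff_fraction by blast
  obtain c d where cd: "d > 0" "\<not> int p dvd d" "s = of_int c / of_int d"
    using assms(3) Zp_set_iff_fraction by blast
  have "r * s = of_int (a * c) / of_int (b * d)" using ab cd by simp
  moreover have "\<not> int p dvd b * d"
    using ab(2) cd(2) assms(1) by (simp add: prime_dvd_mult_iff)
  moreover have "b * d > 0" using ab(1) cd(1) by simp
  ultimately show ?thesis using Zp_set_iff_fraction by blast
qed

lemma zero_in_Zp_set: "prime p \<Longrightarrow> 0 \<in> Zp_set p"
  unfolding Zp_set_def using prime_gt_1_nat by fastforce

lemma one_in_Zp_set: "prime p \<Longrightarrow> 1 \<in> Zp_set p"
  unfolding Zp_set_def using prime_gt_1_nat by fastforce

lemma Zp_ring_simps:
  "carrier (Zp_ring p) = Zp_set p" "\<zero>\<^bsub>Zp_ring p\<^esub> = 0" "\<one>\<^bsub>Zp_ring p\<^esub> = 1"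
  "(\<oplus>\<^bsub>Zp_ring p\<^esub>) = (+)" "(\<otimes>\<^bsub>Zp_ring p\<^esub>) = (*)"
  by (simp_all add: Zp_ring_def)

definition Phi :: "nat \<Rightarrow> nat \<Rightarrow> rat" where
  "Phi m = (\<lambda>k. if k = m then 1 else 0)"

lemma A_ring_carrier_iff: "a \<in> carrier (A_ring p q) \<longleftrightarrow> (\<forall>n. a n \<in> Zp_set p)"
  by (simp add: A_ring_def)

lemma A_ring_add: "a \<oplus>\<^bsub>A_ring p q\<^esub> b = (\<lambda>n. a n + b n)"
  by (simp add: A_ring_def)

lemma A_ring_add_closed:
  "prime p \<Longrightarrow> a \<in> carrier (A_ring p q) \<Longrightarrow> b \<in> carrier (A_ring p q)
    \<Longrightarrow> a \<oplus>\<^bsub>A_ring p q\<^esub> b \<in> carrier (A_ring p q)"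
  by (simp add: A_ring_add A_ring_carrier_iff Zp_set_add)

lemma A_scal_closed:
  "prime p \<Longrightarrow> r \<in> Zp_set p \<Longrightarrow> a \<in> carrier (A_ring p q) \<Longrightarrow> A_scal r a \<in> carrier (A_ring p q)"
  by (simp add: A_scal_def A_ring_carrier_iff Zp_set_mult)

lemma Phi_in_A_ring: "prime p \<Longrightarrow> Phi m \<in> carrier (A_ring p q)"
  by (simp add: Phi_def A_ring_carrier_iff zero_in_Zp_set one_in_Zp_set)

lemma A_filt_0: "A_filt p q 0 = carrier (A_ring p q)"
  by (simp add: A_filt_def)

lemma A_filt_antimono: "m \<le> n \<Longrightarrow> A_filt p q n \<subseteq> A_filt p q m"
  by (auto simp: A_filt_def)

lemma A_filt_split:
  assumes "prime p" "a \<in> A_filt p q m"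
  defines "a' \<equiv> \<lambda>k. if k \<le> m then 0 else a k"
  shows "A_scal (a m) (Phi m) \<in> carrier (A_ring p q)" "a' \<in> A_filt p q (Suc m)"
    "a = A_scal (a m) (Phi m) \<oplus>\<^bsub>A_ring p q\<^esub> a'"
  using assms
  by (auto simp: A_filt_def A_ring_carrier_iff A_ring_add A_scal_def Phi_def zero_in_Zp_set)

section \<open>Continuous homomorphisms out of A\<close>

definition A_linear :: "nat \<Rightarrow> int \<Rightarrow> (rat, 'a) module \<Rightarrow> ((nat \<Rightarrow> rat) \<Rightarrow> 'a) \<Rightarrow> bool" where
  "A_linear p q L f \<longleftrightarrow>
     (\<forall>a\<in>carrier (A_ring p q). \<forall>b\<in>carrier (A_ring p q). f (a \<oplus>\<^bsub>A_ring p q\<^esub> b) = f a \<oplus>\<^bsub>L\<^esub> f b)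
   \<and> (\<forall>r\<in>Zp_set p. \<forall>a\<in>carrier (A_ring p q). f (A_scal r a) = r \<odot>\<^bsub>L\<^esub> f a)"

definition vanishes_on_A_filt :: "nat \<Rightarrow> int \<Rightarrow> (rat, 'a) module \<Rightarrow> ((nat \<Rightarrow> rat) \<Rightarrow> 'a) \<Rightarrow> nat \<Rightarrow> bool"
  where "vanishes_on_A_filt p q L f n \<longleftrightarrow> (\<forall>a\<in>A_filt p q n. f a = \<zero>\<^bsub>L\<^esub>)"

lemma U_carrier_iff:
  "f \<in> carrier (U p q L) \<longleftrightarrow> f \<in> extensional (carrier (A_ring p q))
     \<and> f \<in> carrier (A_ring p q) \<rightarrow> carrier L \<and> A_linear p q L f \<and> (\<exists>n. vanishes_on_A_filt p q L f n)"
  by (simp add: U_def U_carrier_def A_linear_def vanishes_on_A_filt_def)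

lemma U_carrierD:
  assumes "f \<in> carrier (U p q L)"
  shows "f \<in> extensional (carrier (A_ring p q))" "a \<in> carrier (A_ring p q) \<Longrightarrow> f a \<in> carrier L"
    "A_linear p q L f" "\<exists>n. vanishes_on_A_filt p q L f n"
  using assms unfolding U_carrier_iff by blast+

lemma U_zero_eq: "\<zero>\<^bsub>U p q L\<^esub> = (\<lambda>t\<in>carrier (A_ring p q). \<zero>\<^bsub>L\<^esub>)"
  by (simp add: U_def)

lemma vanishes_on_A_filt_mono:
  "vanishes_on_A_filt p q L f m \<Longrightarrow> m \<le> n \<Longrightarrow> vanishes_on_A_filt p q L f n"
  unfolding vanishes_on_A_filt_def using A_filt_antimono by blast

lemma U_common_vanishing_level:
  assumes "f \<in> carrier (U p q L)" "g \<in> carrier (U p q L')"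
  obtains n where "vanishes_on_A_filt p q L f n" "vanishes_on_A_filt p q L' g n"
proof -
  obtain n1 n2 where "vanishes_on_A_filt p q L f n1" "vanishes_on_A_filt p q L' g n2"
    using assms U_carrierD(4) by metis
  then show ?thesis
    using that vanishes_on_A_filt_mono[of p q _ _ _ "max n1 n2"] by (meson max.cobounded1 max.cobounded2)
qed

text \<open>No module structure on \<open>L\<close> is assumed, since this is applied to direct limits, which
  are not shown to be modules.  Agreement on \<open>A_m\<close> follows by downward induction on \<open>m\<close>,
  splitting off the coefficient of \<open>Phi m\<close>.\<close>
lemma A_linear_eqI:
  assumes "prime p" "A_linear p q L f" "A_linear p q L g"
    "vanishes_on_A_filt p q L f n" "vanishes_on_A_filt p q L g n"
    "\<And>m. m < n \<Longrightarrow> f (Phi m) = g (Phi m)" "a \<in> carrier (A_ring p q)"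
  shows "f a = g a"
proof -
  have "\<forall>a\<in>A_filt p q j. f a = g a" if "j \<le> n" for j
    using that
  proof (induction rule: inc_induct)
    case base
    then show ?case using assms(4,5) by (simp add: vanishes_on_A_filt_def)
  next
    case (step m)
    show ?case
    proof
      fix a assume a: "a \<in> A_filt p q m"
      define a' where "a' = (\<lambda>k. if k \<le> m then 0 else a k)"
      have split: "A_scal (a m) (Phi m) \<in> carrier (A_ring p q)" "a' \<in> A_filt p q (Suc m)"
        "a = A_scal (a m) (Phi m) \<oplus>\<^bsub>A_ring p q\<^esub> a'"
        using A_filt_split[OF assms(1) a] unfolding a'_def by blast+
      have am: "a m \<in> Zp_set p" and a': "a' \<in> carrier (A_ring p q)"
        using a split(2) by (auto simp: A_filt_def A_ring_carrier_iff)
      have Phi: "Phi m \<in> carrier (A_ring p q)" using Phi_in_A_ring[OF assms(1)] .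
      have "f a = a m \<odot>\<^bsub>L\<^esub> f (Phi m) \<oplus>\<^bsub>L\<^esub> f a'"
        using assms(2) split(1,3) a' am Phi unfolding A_linear_def by metis
      moreover have "g a = a m \<odot>\<^bsub>L\<^esub> g (Phi m) \<oplus>\<^bsub>L\<^esub> g a'"
        using assms(3) split(1,3) a' am Phi unfolding A_linear_def by metis
      ultimately show "f a = g a" using step split(2) assms(6) by simp
    qed
  qed
  from this[of 0] show ?thesis using assms(7) by (simp add: A_filt_0)
qed

lemma U_eqI:
  assumes "prime p" "f \<in> carrier (U p q L)" "g \<in> carrier (U p q L)"
    "vanishes_on_A_filt p q L f n" "vanishes_on_A_filt p q L g n"
    "\<And>m. m < n \<Longrightarrow> f (Phi m) = g (Phi m)"
  shows "f = g"
proof (rule extensionalityI)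
  show "f \<in> extensional (carrier (A_ring p q))" "g \<in> extensional (carrier (A_ring p q))"
    using assms(2,3) by (blast dest: U_carrierD(1))+
  show "f a = g a" if "a \<in> carrier (A_ring p q)" for a
    using A_linear_eqI[OF assms(1) _ _ assms(4-6) that] assms(2,3) U_carrierD(3) by blast
qed

definition U_of_values :: "nat \<Rightarrow> int \<Rightarrow> (rat, 'a) module \<Rightarrow> nat \<Rightarrow> (nat \<Rightarrow> 'a) \<Rightarrow> (nat \<Rightarrow> rat) \<Rightarrow> 'a"
  where "U_of_values p q L n x = (\<lambda>a\<in>carrier (A_ring p q). \<Oplus>\<^bsub>L\<^esub>m\<in>{..<n}. a m \<odot>\<^bsub>L\<^esub> x m)"

lemma U_of_values_A_linear:
  assumes "prime p" "module (Zp_ring p) L" "\<And>m. m < n \<Longrightarrow> x m \<in> carrier L"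
  shows "A_linear p q L (U_of_values p q L n x)"
proof -
  interpret L: module "Zp_ring p" L by fact
  let ?f = "U_of_values p q L n x"
  have terms: "(\<lambda>m. a m \<odot>\<^bsub>L\<^esub> x m) \<in> {..<n} \<rightarrow> carrier L" if "a \<in> carrier (A_ring p q)" for a
    using that assms(3) by (auto simp: A_ring_carrier_iff Zp_ring_simps)
  have "?f (a \<oplus>\<^bsub>A_ring p q\<^esub> b) = ?f a \<oplus>\<^bsub>L\<^esub> ?f b"
    if ab: "a \<in> carrier (A_ring p q)" "b \<in> carrier (A_ring p q)" for a b
  proof -
    have "(\<Oplus>\<^bsub>L\<^esub>m\<in>{..<n}. (a m + b m) \<odot>\<^bsub>L\<^esub> x m)
        = (\<Oplus>\<^bsub>L\<^esub>m\<in>{..<n}. a m \<odot>\<^bsub>L\<^esub> x m \<oplus>\<^bsub>L\<^esub> b m \<odot>\<^bsub>L\<^esub> x m)"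
      using ab assms(3) L.smult_l_distr
      by (intro L.finsum_cong) (auto simp: A_ring_carrier_iff Zp_ring_simps)
    also have "\<dots> = (\<Oplus>\<^bsub>L\<^esub>m\<in>{..<n}. a m \<odot>\<^bsub>L\<^esub> x m) \<oplus>\<^bsub>L\<^esub> (\<Oplus>\<^bsub>L\<^esub>m\<in>{..<n}. b m \<odot>\<^bsub>L\<^esub> x m)"
      using terms ab by (intro L.finsum_addf)
    finally show ?thesis
      using ab A_ring_add_closed[OF assms(1) ab] by (simp add: U_of_values_def A_ring_add)
  qed
  moreover have "?f (A_scal r a) = r \<odot>\<^bsub>L\<^esub> ?f a"
    if ra: "r \<in> Zp_set p" "a \<in> carrier (A_ring p q)" for r a
  proof -
    have "(\<Oplus>\<^bsub>L\<^esub>m\<in>{..<n}. (r * a m) \<odot>\<^bsub>L\<^esub> x m) = (\<Oplus>\<^bsub>L\<^esub>m\<in>{..<n}. r \<odot>\<^bsub>L\<^esub> (a m \<odot>\<^bsub>L\<^esub> x m))"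
      using ra assms(3) L.smult_assoc1
      by (intro L.finsum_cong) (auto simp: A_ring_carrier_iff Zp_ring_simps)
    also have "\<dots> = r \<odot>\<^bsub>L\<^esub> (\<Oplus>\<^bsub>L\<^esub>m\<in>{..<n}. a m \<odot>\<^bsub>L\<^esub> x m)"
      using terms ra by (intro L.finsum_smult_ldistr[symmetric]) (auto simp: Zp_ring_simps)
    finally show ?thesis
      using ra A_scal_closed[OF assms(1) ra] by (simp add: U_of_values_def A_scal_def)
  qed
  ultimately show ?thesis by (simp add: A_linear_def)
qed

lemma U_of_values:
  assumes "prime p" "module (Zp_ring p) L" "\<And>m. m < n \<Longrightarrow> x m \<in> carrier L"
  shows "U_of_values p q L n x \<in> carrier (U p q L)" "vanishes_on_A_filt p q L (U_of_values p q L n x) n"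
    "m < n \<Longrightarrow> U_of_values p q L n x (Phi m) = x m"
proof -
  interpret L: module "Zp_ring p" L by fact
  let ?f = "U_of_values p q L n x"
  have zero_smult: "0 \<odot>\<^bsub>L\<^esub> y = \<zero>\<^bsub>L\<^esub>" and one_smult: "1 \<odot>\<^bsub>L\<^esub> y = y"
    if "y \<in> carrier L" for y
    using that L.smult_l_null L.smult_one by (simp_all add: Zp_ring_simps)
  show vanish: "vanishes_on_A_filt p q L ?f n"
    unfolding vanishes_on_A_filt_def
  proof
    fix a assume a: "a \<in> A_filt p q n"
    then have "(\<Oplus>\<^bsub>L\<^esub>m\<in>{..<n}. a m \<odot>\<^bsub>L\<^esub> x m) = (\<Oplus>\<^bsub>L\<^esub>m\<in>{..<n}. \<zero>\<^bsub>L\<^esub>)"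
      using assms(3) by (intro L.finsum_cong) (auto simp: A_filt_def zero_smult)
    then show "?f a = \<zero>\<^bsub>L\<^esub>" using a by (simp add: U_of_values_def A_filt_def)
  qed
  have "(\<lambda>m. a m \<odot>\<^bsub>L\<^esub> x m) \<in> {..<n} \<rightarrow> carrier L" if "a \<in> carrier (A_ring p q)" for a
    using that assms(3) by (auto simp: A_ring_carrier_iff Zp_ring_simps)
  then show "?f \<in> carrier (U p q L)"
    using vanish U_of_values_A_linear[OF assms]
    by (auto simp: U_carrier_iff U_of_values_def intro: L.finsum_closed)
  assume m: "m < n"
  have "Phi m k \<odot>\<^bsub>L\<^esub> x k = (if m = k then x k else \<zero>\<^bsub>L\<^esub>)" if "k < n" for k
    using that assms(3) by (cases "k = m") (auto simp: Phi_def zero_smult one_smult)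
  then have "(\<Oplus>\<^bsub>L\<^esub>k\<in>{..<n}. Phi m k \<odot>\<^bsub>L\<^esub> x k) = (\<Oplus>\<^bsub>L\<^esub>k\<in>{..<n}. if m = k then x k else \<zero>\<^bsub>L\<^esub>)"
    using assms(3) by (intro L.finsum_cong) auto
  also have "\<dots> = x m" using m assms(3) by (intro L.finsum_singleton) auto
  finally show "?f (Phi m) = x m" using Phi_in_A_ring[OF assms(1)] by (simp add: U_of_values_def)
qed

section \<open>The functor U on morphisms and exactness\<close>

lemma mod_hom_zero:
  assumes "module R M" "module R N" "f \<in> mod_hom R M N"
  shows "f \<zero>\<^bsub>M\<^esub> = \<zero>\<^bsub>N\<^esub>"
proof -
  interpret M: module R M by fact
  interpret N: module R N by fact
  have f0: "f \<zero>\<^bsub>M\<^esub> \<in> carrier N" using assms(3) by (auto simp: mod_hom_def)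
  have "f \<zero>\<^bsub>M\<^esub> = f (\<zero>\<^bsub>M\<^esub> \<oplus>\<^bsub>M\<^esub> \<zero>\<^bsub>M\<^esub>)" by simp
  also have "\<dots> = f \<zero>\<^bsub>M\<^esub> \<oplus>\<^bsub>N\<^esub> f \<zero>\<^bsub>M\<^esub>"
    using assms(3) M.zero_closed unfolding mod_hom_def by blast
  finally show ?thesis using N.add.l_cancel_one'[OF f0 f0] by simp
qed

lemma Umap_closed:
  assumes "prime p" "module (Zp_ring p) L1" "module (Zp_ring p) L2" "f \<in> mod_hom (Zp_ring p) L1 L2"
    and \<phi>: "\<phi> \<in> carrier (U p q L1)" "vanishes_on_A_filt p q L1 \<phi> n"
  shows "Umap p q f \<phi> \<in> carrier (U p q L2)" "vanishes_on_A_filt p q L2 (Umap p q f \<phi>) n"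
proof -
  have f: "f \<in> carrier L1 \<rightarrow> carrier L2"
    "\<And>x y. x \<in> carrier L1 \<Longrightarrow> y \<in> carrier L1 \<Longrightarrow> f (x \<oplus>\<^bsub>L1\<^esub> y) = f x \<oplus>\<^bsub>L2\<^esub> f y"
    "\<And>r x. r \<in> Zp_set p \<Longrightarrow> x \<in> carrier L1 \<Longrightarrow> f (r \<odot>\<^bsub>L1\<^esub> x) = r \<odot>\<^bsub>L2\<^esub> f x"
    using assms(4) by (auto simp: mod_hom_def Zp_ring_simps)
  have val: "\<And>a. a \<in> carrier (A_ring p q) \<Longrightarrow> \<phi> a \<in> carrier L1" and lin: "A_linear p q L1 \<phi>"
    using \<phi>(1) U_carrierD by blast+
  have "A_linear p q L2 (Umap p q f \<phi>)"
    using lin val f(2,3) A_ring_add_closed[OF assms(1)] A_scal_closed[OF assms(1)]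
    by (simp add: A_linear_def Umap_def)
  moreover show "vanishes_on_A_filt p q L2 (Umap p q f \<phi>) n"
    using \<phi>(2) mod_hom_zero[OF assms(2-4)] by (simp add: vanishes_on_A_filt_def Umap_def A_filt_def)
  ultimately show "Umap p q f \<phi> \<in> carrier (U p q L2)"
    using val f(1) by (auto simp: U_carrier_iff Umap_def)
qed

lemma Umap_exact:
  assumes pp: "prime p" and L1: "module (Zp_ring p) L1" and L2: "module (Zp_ring p) L2"
    and f: "f \<in> mod_hom (Zp_ring p) L1 L2"
    and exact: "f ` carrier L1 = {y \<in> carrier L2. g y = \<zero>\<^bsub>L3\<^esub>}"
  shows "Umap p q f ` carrier (U p q L1) = {\<psi> \<in> carrier (U p q L2). Umap p q g \<psi> = \<zero>\<^bsub>U p q L3\<^esub>}"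
proof (intro equalityI subsetI)
  fix \<psi> assume "\<psi> \<in> Umap p q f ` carrier (U p q L1)"
  then obtain \<phi> where \<phi>: "\<phi> \<in> carrier (U p q L1)" and \<psi>: "\<psi> = Umap p q f \<phi>" by blast
  obtain n where "vanishes_on_A_filt p q L1 \<phi> n" using U_carrierD(4)[OF \<phi>] by blast
  then have "\<psi> \<in> carrier (U p q L2)" using Umap_closed[OF pp L1 L2 f \<phi>] \<psi> by blast
  moreover have "g (f (\<phi> t)) = \<zero>\<^bsub>L3\<^esub>" if "t \<in> carrier (A_ring p q)" for t
    using U_carrierD(2)[OF \<phi> that] exact by blast
  then have "Umap p q g \<psi> = \<zero>\<^bsub>U p q L3\<^esub>" by (auto simp: \<psi> Umap_def U_zero_eq)
  ultimately show "\<psi> \<in> {\<psi> \<in> carrier (U p q L2). Umap p q g \<psi> = \<zero>\<^bsub>U p q L3\<^esub>}" by blast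
next
  fix \<psi> assume "\<psi> \<in> {\<psi> \<in> carrier (U p q L2). Umap p q g \<psi> = \<zero>\<^bsub>U p q L3\<^esub>}"
  then have \<psi>: "\<psi> \<in> carrier (U p q L2)" and g\<psi>: "Umap p q g \<psi> = \<zero>\<^bsub>U p q L3\<^esub>" by auto
  obtain n where \<psi>n: "vanishes_on_A_filt p q L2 \<psi> n" using U_carrierD(4)[OF \<psi>] by blast
  have "\<psi> (Phi m) \<in> f ` carrier L1" for m
    using U_carrierD(2)[OF \<psi> Phi_in_A_ring[OF pp]] fun_cong[OF g\<psi>, of "Phi m"] exact Phi_in_A_ring[OF pp]
    by (simp add: Umap_def U_zero_eq)
  then have "\<forall>m. \<exists>y. y \<in> carrier L1 \<and> f y = \<psi> (Phi m)" by (metis imageE)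
  from choice[OF this] obtain x where x: "\<forall>m. x m \<in> carrier L1 \<and> f (x m) = \<psi> (Phi m)"
    by blast
  have xn: "\<And>m. m < n \<Longrightarrow> x m \<in> carrier L1" using x by blast
  let ?\<phi> = "U_of_values p q L1 n x"
  have "Umap p q f ?\<phi> = \<psi>"
  proof (rule U_eqI[OF pp _ \<psi> _ \<psi>n])
    show "Umap p q f ?\<phi> \<in> carrier (U p q L2)" "vanishes_on_A_filt p q L2 (Umap p q f ?\<phi>) n"
      using Umap_closed[OF pp L1 L2 f U_of_values(1,2)[where x = x, OF pp L1 xn]] by blast+
    show "Umap p q f ?\<phi> (Phi m) = \<psi> (Phi m)" if "m < n" for m
      using U_of_values(3)[where x = x, OF pp L1 xn that] x Phi_in_A_ring[OF pp] by (simp add: Umap_def)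
  qed
  then show "\<psi> \<in> Umap p q f ` carrier (U p q L1)" using U_of_values(1)[where x = x, OF pp L1 xn] by blast
qed

section \<open>Direct sums\<close>

lemma dsum_simps:
  "carrier (dsum I L) = {x \<in> Pi\<^sub>E I (\<lambda>i. carrier (L i)). finite {i\<in>I. x i \<noteq> \<zero>\<^bsub>L i\<^esub>}}"
  "\<zero>\<^bsub>dsum I L\<^esub> = (\<lambda>i\<in>I. \<zero>\<^bsub>L i\<^esub>)"
  "x \<oplus>\<^bsub>dsum I L\<^esub> y = (\<lambda>i\<in>I. x i \<oplus>\<^bsub>L i\<^esub> y i)"
  "r \<odot>\<^bsub>dsum I L\<^esub> x = (\<lambda>i\<in>I. r \<odot>\<^bsub>L i\<^esub> x i)"
  by (simp_all add: dsum_def)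

lemma U_zero_closed:
  assumes "prime p" "module (Zp_ring p) L"
  shows "\<zero>\<^bsub>U p q L\<^esub> \<in> carrier (U p q L)" "vanishes_on_A_filt p q L \<zero>\<^bsub>U p q L\<^esub> n"
proof -
  interpret L: module "Zp_ring p" L by fact
  have "A_linear p q L \<zero>\<^bsub>U p q L\<^esub>"
    using L.smult_r_null A_ring_add_closed[OF assms(1)] A_scal_closed[OF assms(1)]
    by (simp add: A_linear_def U_zero_eq Zp_ring_simps)
  moreover show "vanishes_on_A_filt p q L \<zero>\<^bsub>U p q L\<^esub> n"
    by (simp add: vanishes_on_A_filt_def U_zero_eq A_filt_def)
  ultimately show "\<zero>\<^bsub>U p q L\<^esub> \<in> carrier (U p q L)"
    by (auto simp: U_carrier_iff U_zero_eq)
qed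

lemma U_eq_zeroI:
  assumes "prime p" "module (Zp_ring p) L" "f \<in> carrier (U p q L)" "vanishes_on_A_filt p q L f n"
    "\<And>m. m < n \<Longrightarrow> f (Phi m) = \<zero>\<^bsub>L\<^esub>"
  shows "f = \<zero>\<^bsub>U p q L\<^esub>"
  using U_eqI[OF assms(1,3) U_zero_closed(1)[OF assms(1,2)] assms(4) U_zero_closed(2)[OF assms(1,2)]]
    assms(5) Phi_in_A_ring[OF assms(1)] by (simp add: U_zero_eq)

lemma dsum_comparison_closed:
  assumes pp: "prime p" and \<Phi>: "\<Phi> \<in> carrier (dsum I (\<lambda>i. U p q (L i)))"
  shows "(\<lambda>t\<in>carrier (A_ring p q). \<lambda>i\<in>I. \<Phi> i t) \<in> carrier (U p q (dsum I L))"
proof -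
  let ?G = "\<lambda>t\<in>carrier (A_ring p q). \<lambda>i\<in>I. \<Phi> i t"
  define S where "S = {i\<in>I. \<Phi> i \<noteq> \<zero>\<^bsub>U p q (L i)\<^esub>}"
  have \<Phi>i: "\<And>i. i \<in> I \<Longrightarrow> \<Phi> i \<in> carrier (U p q (L i))" and S: "finite S"
    using \<Phi> by (auto simp: dsum_simps S_def)
  have outside_S: "\<Phi> i t = \<zero>\<^bsub>L i\<^esub>" if "i \<in> I" "i \<notin> S" "t \<in> carrier (A_ring p q)" for i t
    using that by (simp add: S_def U_zero_eq)
  have "?G t \<in> carrier (dsum I L)" if t: "t \<in> carrier (A_ring p q)" for t
  proof -
    have "{i\<in>I. \<Phi> i t \<noteq> \<zero>\<^bsub>L i\<^esub>} \<subseteq> S" using outside_S t by auto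
    then have "finite {i\<in>I. (\<lambda>i\<in>I. \<Phi> i t) i \<noteq> \<zero>\<^bsub>L i\<^esub>}"
      using S by (auto intro: finite_subset)
    then show ?thesis using t U_carrierD(2)[OF \<Phi>i t] by (simp add: dsum_simps)
  qed
  moreover have "A_linear p q (dsum I L) ?G"
    using U_carrierD(3)[OF \<Phi>i] A_ring_add_closed[OF pp] A_scal_closed[OF pp]
    by (auto simp: A_linear_def dsum_simps intro!: restrict_ext)
  moreover have "\<exists>N. vanishes_on_A_filt p q (dsum I L) ?G N"
  proof -
    have "\<forall>i\<in>I. \<exists>n. vanishes_on_A_filt p q (L i) (\<Phi> i) n" using U_carrierD(4)[OF \<Phi>i] by blast
    from bchoice[OF this] obtain n where n: "\<forall>i\<in>I. vanishes_on_A_filt p q (L i) (\<Phi> i) (n i)"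
      by blast
    define N where "N = (\<Sum>i\<in>S. n i)"
    have "vanishes_on_A_filt p q (L i) (\<Phi> i) N" if "i \<in> S" for i
    proof -
      have "i \<in> I" "n i \<le> N" using that S by (simp_all add: S_def N_def member_le_sum)
      then show ?thesis using n vanishes_on_A_filt_mono by metis
    qed
    then have "vanishes_on_A_filt p q (dsum I L) ?G N"
      using outside_S by (auto simp: vanishes_on_A_filt_def dsum_simps A_filt_def intro!: restrict_ext)
    then show ?thesis by blast
  qed
  ultimately show ?thesis by (simp add: U_carrier_iff)
qed

lemma dsum_comparison_inj:
  "inj_on (\<lambda>\<Phi>. \<lambda>t\<in>carrier (A_ring p q). \<lambda>i\<in>I. \<Phi> i t) (carrier (dsum I (\<lambda>i. U p q (L i))))"
proof (rule inj_onI)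
  fix \<Phi> \<Psi>
  assume "\<Phi> \<in> carrier (dsum I (\<lambda>i. U p q (L i)))" "\<Psi> \<in> carrier (dsum I (\<lambda>i. U p q (L i)))"
  then have \<Phi>\<Psi>: "\<Phi> \<in> Pi\<^sub>E I (\<lambda>i. carrier (U p q (L i)))" "\<Psi> \<in> Pi\<^sub>E I (\<lambda>i. carrier (U p q (L i)))"
    by (simp_all add: dsum_simps)
  assume eq: "(\<lambda>t\<in>carrier (A_ring p q). \<lambda>i\<in>I. \<Phi> i t) = (\<lambda>t\<in>carrier (A_ring p q). \<lambda>i\<in>I. \<Psi> i t)"
  have "\<Phi> i = \<Psi> i" if i: "i \<in> I" for i
  proof (rule extensionalityI)
    show "\<Phi> i \<in> extensional (carrier (A_ring p q))" "\<Psi> i \<in> extensional (carrier (A_ring p q))"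
      using \<Phi>\<Psi> i U_carrierD(1) by blast+
    show "\<Phi> i t = \<Psi> i t" if "t \<in> carrier (A_ring p q)" for t
      using fun_cong[OF fun_cong[OF eq, of t], of i] that i by simp
  qed
  moreover have "\<Phi> \<in> extensional I" "\<Psi> \<in> extensional I" using \<Phi>\<Psi> by (simp_all add: PiE_def)
  ultimately show "\<Phi> = \<Psi>" by (intro extensionalityI[of _ I]) auto
qed

lemma U_dsum_component:
  assumes pp: "prime p" and G: "G \<in> carrier (U p q (dsum I L))"
    and Gn: "vanishes_on_A_filt p q (dsum I L) G n" and i: "i \<in> I"
  shows "(\<lambda>t\<in>carrier (A_ring p q). G t i) \<in> carrier (U p q (L i))"
    "vanishes_on_A_filt p q (L i) (\<lambda>t\<in>carrier (A_ring p q). G t i) n"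
proof -
  let ?Gi = "\<lambda>t\<in>carrier (A_ring p q). G t i"
  have "A_linear p q (L i) ?Gi"
    unfolding A_linear_def
  proof (intro conjI ballI)
    fix a b assume ab: "a \<in> carrier (A_ring p q)" "b \<in> carrier (A_ring p q)"
    have "G (a \<oplus>\<^bsub>A_ring p q\<^esub> b) = G a \<oplus>\<^bsub>dsum I L\<^esub> G b"
      using U_carrierD(3)[OF G] ab unfolding A_linear_def by blast
    then show "?Gi (a \<oplus>\<^bsub>A_ring p q\<^esub> b) = ?Gi a \<oplus>\<^bsub>L i\<^esub> ?Gi b"
      using i ab A_ring_add_closed[OF pp ab] by (simp add: dsum_simps)
  next
    fix r a assume ra: "r \<in> Zp_set p" "a \<in> carrier (A_ring p q)"
    have "G (A_scal r a) = r \<odot>\<^bsub>dsum I L\<^esub> G a"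
      using U_carrierD(3)[OF G] ra unfolding A_linear_def by blast
    then show "?Gi (A_scal r a) = r \<odot>\<^bsub>L i\<^esub> ?Gi a"
      using i ra A_scal_closed[OF pp ra] by (simp add: dsum_simps)
  qed
  moreover show "vanishes_on_A_filt p q (L i) ?Gi n"
    using Gn i by (simp add: vanishes_on_A_filt_def dsum_simps A_filt_def)
  ultimately show "?Gi \<in> carrier (U p q (L i))"
    using U_carrierD(2)[OF G] i by (auto simp: U_carrier_iff dsum_simps)
qed

lemma dsum_comparison_surj:
  assumes pp: "prime p" and L: "\<And>i. i \<in> I \<Longrightarrow> module (Zp_ring p) (L i)"
    and G: "G \<in> carrier (U p q (dsum I L))"
  shows "G \<in> (\<lambda>\<Phi>. \<lambda>t\<in>carrier (A_ring p q). \<lambda>i\<in>I. \<Phi> i t) ` carrier (dsum I (\<lambda>i. U p q (L i)))"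
proof -
  define \<Phi> where "\<Phi> = (\<lambda>i\<in>I. \<lambda>t\<in>carrier (A_ring p q). G t i)"
  obtain n where Gn: "vanishes_on_A_filt p q (dsum I L) G n" using U_carrierD(4)[OF G] by blast
  have Gt: "G t \<in> Pi\<^sub>E I (\<lambda>i. carrier (L i))" "finite {i\<in>I. G t i \<noteq> \<zero>\<^bsub>L i\<^esub>}"
    if "t \<in> carrier (A_ring p q)" for t
    using U_carrierD(2)[OF G that] by (simp_all add: dsum_simps)
  have \<Phi>i: "\<Phi> i \<in> carrier (U p q (L i))" "vanishes_on_A_filt p q (L i) (\<Phi> i) n" if "i \<in> I" for i
    using U_dsum_component[OF pp G Gn that] that by (simp_all add: \<Phi>_def)
  have "{i\<in>I. \<Phi> i \<noteq> \<zero>\<^bsub>U p q (L i)\<^esub>} \<subseteq> (\<Union>m<n. {i\<in>I. G (Phi m) i \<noteq> \<zero>\<^bsub>L i\<^esub>})"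
  proof (rule subsetI, rule ccontr)
    fix i assume i: "i \<in> {i\<in>I. \<Phi> i \<noteq> \<zero>\<^bsub>U p q (L i)\<^esub>}"
      and "i \<notin> (\<Union>m<n. {i\<in>I. G (Phi m) i \<noteq> \<zero>\<^bsub>L i\<^esub>})"
    then have iI: "i \<in> I" and "\<And>m. m < n \<Longrightarrow> \<Phi> i (Phi m) = \<zero>\<^bsub>L i\<^esub>"
      using Phi_in_A_ring[OF pp] by (auto simp: \<Phi>_def)
    then have "\<Phi> i = \<zero>\<^bsub>U p q (L i)\<^esub>" using U_eq_zeroI[OF pp L \<Phi>i] by blast
    then show False using i by blast
  qed
  moreover have "finite (\<Union>m<n. {i\<in>I. G (Phi m) i \<noteq> \<zero>\<^bsub>L i\<^esub>})"
    using Gt(2)[OF Phi_in_A_ring[OF pp]] by blast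
  ultimately have "finite {i\<in>I. \<Phi> i \<noteq> \<zero>\<^bsub>U p q (L i)\<^esub>}" by (rule finite_subset)
  moreover have "\<Phi> \<in> Pi\<^sub>E I (\<lambda>i. carrier (U p q (L i)))" using \<Phi>i(1) by (simp add: \<Phi>_def)
  ultimately have "\<Phi> \<in> carrier (dsum I (\<lambda>i. U p q (L i)))" by (simp add: dsum_simps)
  moreover have "(\<lambda>t\<in>carrier (A_ring p q). \<lambda>i\<in>I. \<Phi> i t) = G"
  proof (rule extensionalityI)
    show "G \<in> extensional (carrier (A_ring p q))" using U_carrierD(1)[OF G] .
    show "(\<lambda>t\<in>carrier (A_ring p q). \<lambda>i\<in>I. \<Phi> i t) t = G t" if "t \<in> carrier (A_ring p q)" for t
      using Gt(1)[OF that] that by (auto simp: \<Phi>_def PiE_def extensional_def)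
  qed simp
  ultimately show ?thesis by blast
qed

lemma U_dsum_bij:
  assumes "prime p" "\<And>i. i \<in> I \<Longrightarrow> module (Zp_ring p) (L i)"
  shows "bij_betw (\<lambda>\<Phi>. \<lambda>t\<in>carrier (A_ring p q). \<lambda>i\<in>I. \<Phi> i t)
    (carrier (dsum I (\<lambda>i. U p q (L i)))) (carrier (U p q (dsum I L)))"
  unfolding bij_betw_def
proof (intro conjI equalityI subsetI)
  show "inj_on (\<lambda>\<Phi>. \<lambda>t\<in>carrier (A_ring p q). \<lambda>i\<in>I. \<Phi> i t) (carrier (dsum I (\<lambda>i. U p q (L i))))"
    by (rule dsum_comparison_inj)
  show "G \<in> carrier (U p q (dsum I L))"
    if "G \<in> (\<lambda>\<Phi>. \<lambda>t\<in>carrier (A_ring p q). \<lambda>i\<in>I. \<Phi> i t) ` carrier (dsum I (\<lambda>i. U p q (L i)))" for G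
    using that dsum_comparison_closed[OF assms(1)] by blast
qed (rule dsum_comparison_surj[OF assms])

section \<open>Direct limits\<close>

lemma dirlim_carrier: "carrier (dirlim I leq L \<phi>) = (SIGMA i:I. carrier (L i)) // dl_rel I leq L \<phi>"
  by (simp add: dirlim_def)

text \<open>The set-theoretic part of a direct system; it is also needed for the system of the
  \<open>U L\<^sub>i\<close>, which are modules over \<open>A\<close> rather than over the p-local integers.\<close>
locale direct_system =
  fixes I :: "'i set" and leq :: "'i \<Rightarrow> 'i \<Rightarrow> bool" and L :: "'i \<Rightarrow> ('r, 'a) module"
    and \<phi> :: "'i \<Rightarrow> 'i \<Rightarrow> 'a \<Rightarrow> 'a"
  assumes index_nonempty: "I \<noteq> {}"
    and leq_refl: "i \<in> I \<Longrightarrow> leq i i"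
    and leq_trans: "i \<in> I \<Longrightarrow> j \<in> I \<Longrightarrow> k \<in> I \<Longrightarrow> leq i j \<Longrightarrow> leq j k \<Longrightarrow> leq i k"
    and directed: "i \<in> I \<Longrightarrow> j \<in> I \<Longrightarrow> \<exists>k\<in>I. leq i k \<and> leq j k"
    and transition_id: "i \<in> I \<Longrightarrow> x \<in> carrier (L i) \<Longrightarrow> \<phi> i i x = x"
    and transition_comp: "i \<in> I \<Longrightarrow> j \<in> I \<Longrightarrow> k \<in> I \<Longrightarrow> leq i j \<Longrightarrow> leq j k
      \<Longrightarrow> x \<in> carrier (L i) \<Longrightarrow> \<phi> j k (\<phi> i j x) = \<phi> i k x"
    and transition_closed: "i \<in> I \<Longrightarrow> j \<in> I \<Longrightarrow> leq i j \<Longrightarrow> x \<in> carrier (L i)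
      \<Longrightarrow> \<phi> i j x \<in> carrier (L j)"
begin

lemma finite_upper_bound: "finite F \<Longrightarrow> F \<subseteq> I \<Longrightarrow> \<exists>m\<in>I. \<forall>i\<in>F. leq i m"
proof (induction F rule: finite_induct)
  case empty
  then show ?case using index_nonempty by blast
next
  case (insert i F)
  then obtain m where m: "m \<in> I" "\<forall>j\<in>F. leq j m" by auto
  obtain k where k: "k \<in> I" "leq i k" "leq m k" using directed[OF _ m(1), of i] insert.prems by auto
  then have "\<forall>j\<in>insert i F. leq j k" using m leq_trans insert.prems by blast
  then show ?case using k(1) by blast
qed

lemma transition_eq_upwards:
  assumes "i \<in> I" "j \<in> I" "k \<in> I" "m \<in> I" "leq i k" "leq j k" "leq k m"
    "x \<in> carrier (L i)" "y \<in> carrier (L j)" "\<phi> i k x = \<phi> j k y"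
  shows "\<phi> i m x = \<phi> j m y"
proof -
  have "\<phi> i m x = \<phi> k m (\<phi> i k x)" using transition_comp[of i k m x] assms by simp
  also have "\<dots> = \<phi> j m y" using transition_comp[of j k m y] assms by simp
  finally show ?thesis .
qed

lemma equiv_dl_rel: "equiv (SIGMA i:I. carrier (L i)) (dl_rel I leq L \<phi>)"
proof (rule equivI)
  show "dl_rel I leq L \<phi> \<subseteq> (SIGMA i:I. carrier (L i)) \<times> (SIGMA i:I. carrier (L i))"
    unfolding dl_rel_def by auto
  show "refl_on (SIGMA i:I. carrier (L i)) (dl_rel I leq L \<phi>)"
    by (rule refl_onI) (auto simp: dl_rel_def intro: leq_refl)
  show "sym (dl_rel I leq L \<phi>)" unfolding dl_rel_def sym_def by auto
  show "trans (dl_rel I leq L \<phi>)"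
  proof (rule transI)
    fix u v w assume uv: "(u, v) \<in> dl_rel I leq L \<phi>" and vw: "(v, w) \<in> dl_rel I leq L \<phi>"
    obtain i x j y l z where uvw: "u = (i, x)" "v = (j, y)" "w = (l, z)" by (metis prod.collapse)
    obtain k where k: "i \<in> I" "j \<in> I" "x \<in> carrier (L i)" "y \<in> carrier (L j)" "k \<in> I"
        "leq i k" "leq j k" "\<phi> i k x = \<phi> j k y"
      using uv unfolding uvw dl_rel_def by auto
    obtain k' where k': "l \<in> I" "z \<in> carrier (L l)" "k' \<in> I" "leq j k'" "leq l k'" "\<phi> j k' y = \<phi> l k' z"
      using vw unfolding uvw dl_rel_def by auto
    obtain m where m: "m \<in> I" "leq k m" "leq k' m" using directed[OF k(5) k'(3)] by blast
    have "\<phi> i m x = \<phi> j m y" using transition_eq_upwards[of i j k m] k m by blast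
    also have "\<dots> = \<phi> l m z" using transition_eq_upwards[of j l k' m] k k' m by blast
    finally have "\<phi> i m x = \<phi> l m z" .
    moreover have "leq i m" "leq l m" using leq_trans k k' m by blast+
    ultimately show "(u, w) \<in> dl_rel I leq L \<phi>" unfolding uvw dl_rel_def using k k' m by auto
  qed
qed

lemma dl_in_eq_iff:
  assumes "i \<in> I" "x \<in> carrier (L i)" "j \<in> I" "y \<in> carrier (L j)"
  shows "dl_in I leq L \<phi> i x = dl_in I leq L \<phi> j y \<longleftrightarrow> (\<exists>k\<in>I. leq i k \<and> leq j k \<and> \<phi> i k x = \<phi> j k y)"
proof -
  have "dl_in I leq L \<phi> i x = dl_in I leq L \<phi> j y \<longleftrightarrow> ((i, x), (j, y)) \<in> dl_rel I leq L \<phi>"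
    unfolding dl_in_def using eq_equiv_class_iff[OF equiv_dl_rel] assms by blast
  then show ?thesis unfolding dl_rel_def using assms by auto
qed

lemma dl_in_in_dirlim: "i \<in> I \<Longrightarrow> x \<in> carrier (L i) \<Longrightarrow> dl_in I leq L \<phi> i x \<in> carrier (dirlim I leq L \<phi>)"
  unfolding dl_in_def dirlim_carrier by (rule quotientI) auto

lemma mem_dl_in: "i \<in> I \<Longrightarrow> x \<in> carrier (L i) \<Longrightarrow> (i, x) \<in> dl_in I leq L \<phi> i x"
  unfolding dl_in_def by (rule equiv_class_self[OF equiv_dl_rel]) auto

lemma dirlim_elem_cases:
  assumes "X \<in> carrier (dirlim I leq L \<phi>)"
  obtains i x where "i \<in> I" "x \<in> carrier (L i)" "X = dl_in I leq L \<phi> i x"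
  using assms unfolding dl_in_def dirlim_carrier by (auto elim!: quotientE)

lemma dirlim_elem_repr:
  assumes "X \<in> carrier (dirlim I leq L \<phi>)" "(i, x) \<in> X"
  shows "i \<in> I" "x \<in> carrier (L i)" "X = dl_in I leq L \<phi> i x"
proof -
  obtain i0 x0 where X: "i0 \<in> I" "x0 \<in> carrier (L i0)" "X = dl_in I leq L \<phi> i0 x0"
    using dirlim_elem_cases[OF assms(1)] by blast
  then have r: "((i0, x0), (i, x)) \<in> dl_rel I leq L \<phi>" using assms(2) unfolding dl_in_def by simp
  then show "i \<in> I" "x \<in> carrier (L i)" unfolding dl_rel_def by auto
  show "X = dl_in I leq L \<phi> i x" unfolding X(3) dl_in_def using equiv_class_eq[OF equiv_dl_rel r] .
qed

lemma dl_in_transition: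
  assumes "i \<in> I" "k \<in> I" "leq i k" "x \<in> carrier (L i)"
  shows "dl_in I leq L \<phi> k (\<phi> i k x) = dl_in I leq L \<phi> i x"
  unfolding dl_in_eq_iff[OF assms(2) transition_closed[OF assms] assms(1,4)]
  using assms leq_refl[OF assms(2)] transition_id[OF assms(2) transition_closed[OF assms]] by blast

lemma dirlim_finite_family_from_stage:
  assumes "finite F" "\<And>m. m \<in> F \<Longrightarrow> X m \<in> carrier (dirlim I leq L \<phi>)"
  shows "\<exists>K\<in>I. \<exists>y. \<forall>m\<in>F. y m \<in> carrier (L K) \<and> X m = dl_in I leq L \<phi> K (y m)"
proof -
  have "\<exists>ix. fst ix \<in> I \<and> snd ix \<in> carrier (L (fst ix)) \<and> X m = dl_in I leq L \<phi> (fst ix) (snd ix)"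
    if m: "m \<in> F" for m
  proof -
    obtain i x where "i \<in> I" "x \<in> carrier (L i)" "X m = dl_in I leq L \<phi> i x"
      using dirlim_elem_cases[OF assms(2)[OF m]] .
    then show ?thesis by (intro exI[of _ "(i, x)"]) simp
  qed
  then have "\<forall>m\<in>F. \<exists>ix. fst ix \<in> I \<and> snd ix \<in> carrier (L (fst ix))
      \<and> X m = dl_in I leq L \<phi> (fst ix) (snd ix)" by blast
  from bchoice[OF this] obtain ix where ix: "\<forall>m\<in>F. fst (ix m) \<in> I
      \<and> snd (ix m) \<in> carrier (L (fst (ix m))) \<and> X m = dl_in I leq L \<phi> (fst (ix m)) (snd (ix m))"
    by blast
  have "\<exists>K\<in>I. \<forall>i\<in>(fst \<circ> ix) ` F. leq i K" using assms(1) ix by (intro finite_upper_bound) auto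
  then obtain K where K: "K \<in> I" "\<forall>i\<in>(fst \<circ> ix) ` F. leq i K" by blast
  have "\<phi> (fst (ix m)) K (snd (ix m)) \<in> carrier (L K)
      \<and> X m = dl_in I leq L \<phi> K (\<phi> (fst (ix m)) K (snd (ix m)))" if m: "m \<in> F" for m
  proof -
    have "leq (fst (ix m)) K" using K(2) m by simp
    then show ?thesis using ix m K(1) transition_closed dl_in_transition by simp
  qed
  then show ?thesis
    by (intro bexI[OF _ K(1)] exI[of _ "\<lambda>m. \<phi> (fst (ix m)) K (snd (ix m))"]) simp
qed

lemma dl_in_eq_at_common_stage:
  assumes "finite F" "i \<in> I" "j \<in> I"
    and "\<And>m. m \<in> F \<Longrightarrow> x m \<in> carrier (L i)" "\<And>m. m \<in> F \<Longrightarrow> y m \<in> carrier (L j)"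
    and "\<And>m. m \<in> F \<Longrightarrow> dl_in I leq L \<phi> i (x m) = dl_in I leq L \<phi> j (y m)"
  shows "\<exists>K\<in>I. leq i K \<and> leq j K \<and> (\<forall>m\<in>F. \<phi> i K (x m) = \<phi> j K (y m))"
proof -
  have "\<forall>m\<in>F. \<exists>k. k \<in> I \<and> leq i k \<and> leq j k \<and> \<phi> i k (x m) = \<phi> j k (y m)"
    using assms(2-6) dl_in_eq_iff by blast
  from bchoice[OF this] obtain k
    where k: "\<forall>m\<in>F. k m \<in> I \<and> leq i (k m) \<and> leq j (k m) \<and> \<phi> i (k m) (x m) = \<phi> j (k m) (y m)"
    by blast
  have "\<exists>K\<in>I. \<forall>a\<in>insert i (insert j (k ` F)). leq a K"
    using assms(1-3) k by (intro finite_upper_bound) auto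
  then obtain K where K: "K \<in> I" "leq i K" "leq j K" "\<forall>m\<in>F. leq (k m) K" by blast
  have "\<phi> i K (x m) = \<phi> j K (y m)" if m: "m \<in> F" for m
    using k m by (intro transition_eq_upwards[of i j "k m" K]) (auto simp: assms(2-5) K)
  then show ?thesis using K(1-3) by blast
qed

context
  fixes R :: "('r, 'c) ring_scheme"
  assumes modules: "dir_system R I leq L \<phi>"
begin

lemma transition_hom: "i \<in> I \<Longrightarrow> j \<in> I \<Longrightarrow> leq i j \<Longrightarrow> \<phi> i j \<in> mod_hom R (L i) (L j)"
  using modules unfolding dir_system_def by blast

lemma stage_module: "i \<in> I \<Longrightarrow> module R (L i)"
  using modules unfolding dir_system_def by blast

lemma stage_zero_closed: "i \<in> I \<Longrightarrow> \<zero>\<^bsub>L i\<^esub> \<in> carrier (L i)"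
  using stage_module abelian_monoid.zero_closed module.axioms(2) abelian_group.axioms(1) by metis

lemma stage_add_closed:
  "i \<in> I \<Longrightarrow> x \<in> carrier (L i) \<Longrightarrow> y \<in> carrier (L i) \<Longrightarrow> x \<oplus>\<^bsub>L i\<^esub> y \<in> carrier (L i)"
  using stage_module abelian_monoid.a_closed module.axioms(2) abelian_group.axioms(1) by metis

lemma transition_add:
  "i \<in> I \<Longrightarrow> j \<in> I \<Longrightarrow> leq i j \<Longrightarrow> x \<in> carrier (L i) \<Longrightarrow> y \<in> carrier (L i)
    \<Longrightarrow> \<phi> i j (x \<oplus>\<^bsub>L i\<^esub> y) = \<phi> i j x \<oplus>\<^bsub>L j\<^esub> \<phi> i j y"
  using transition_hom unfolding mod_hom_def by blast

lemma dl_in_add_representatives: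
  assumes i: "i \<in> I" and x: "x \<in> carrier (L i)" and y: "y \<in> carrier (L i)"
    and reps: "(i', x') \<in> dl_in I leq L \<phi> i x" "(j', y') \<in> dl_in I leq L \<phi> i y"
    and k: "k \<in> I" "leq i' k" "leq j' k"
  shows "dl_in I leq L \<phi> k (\<phi> i' k x' \<oplus>\<^bsub>L k\<^esub> \<phi> j' k y') = dl_in I leq L \<phi> i (x \<oplus>\<^bsub>L i\<^esub> y)"
proof -
  have i': "i' \<in> I" "x' \<in> carrier (L i')" "dl_in I leq L \<phi> i x = dl_in I leq L \<phi> i' x'"
    and j': "j' \<in> I" "y' \<in> carrier (L j')" "dl_in I leq L \<phi> i y = dl_in I leq L \<phi> j' y'"
    using dirlim_elem_repr[OF dl_in_in_dirlim] reps i x y by blast+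
  obtain k1 where k1: "k1 \<in> I" "leq i k1" "leq i' k1" "\<phi> i k1 x = \<phi> i' k1 x'"
    using dl_in_eq_iff[OF i x i'(1,2)] i'(3) by blast
  obtain k2 where k2: "k2 \<in> I" "leq i k2" "leq j' k2" "\<phi> i k2 y = \<phi> j' k2 y'"
    using dl_in_eq_iff[OF i y j'(1,2)] j'(3) by blast
  obtain m where m: "m \<in> I" "leq k m" "leq k1 m" "leq k2 m"
    using finite_upper_bound[of "{k, k1, k2}"] k(1) k1(1) k2(1) by auto
  have im: "leq i m" using leq_trans[OF i k1(1) m(1) k1(2) m(3)] .
  have cl: "\<phi> i' k x' \<in> carrier (L k)" "\<phi> j' k y' \<in> carrier (L k)"
    using transition_closed i' j' k by blast+
  have "\<phi> k m (\<phi> i' k x' \<oplus>\<^bsub>L k\<^esub> \<phi> j' k y') = \<phi> i' m x' \<oplus>\<^bsub>L m\<^esub> \<phi> j' m y'"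
    using transition_add[OF k(1) m(1,2) cl] transition_comp[OF i'(1) k(1) m(1) k(2) m(2) i'(2)]
      transition_comp[OF j'(1) k(1) m(1) k(3) m(2) j'(2)] by simp
  also have "\<dots> = \<phi> i m x \<oplus>\<^bsub>L m\<^esub> \<phi> i m y"
    using transition_eq_upwards[OF i i'(1) k1(1) m(1) k1(2,3) m(3) x i'(2) k1(4)]
      transition_eq_upwards[OF i j'(1) k2(1) m(1) k2(2,3) m(4) y j'(2) k2(4)] by simp
  also have "\<dots> = \<phi> i m (x \<oplus>\<^bsub>L i\<^esub> y)" using transition_add[OF i m(1) im x y] by simp
  finally have "\<phi> k m (\<phi> i' k x' \<oplus>\<^bsub>L k\<^esub> \<phi> j' k y') = \<phi> i m (x \<oplus>\<^bsub>L i\<^esub> y)" .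
  moreover have "\<phi> i' k x' \<oplus>\<^bsub>L k\<^esub> \<phi> j' k y' \<in> carrier (L k)" "x \<oplus>\<^bsub>L i\<^esub> y \<in> carrier (L i)"
    using stage_add_closed cl x y i k(1) by blast+
  ultimately show ?thesis using dl_in_eq_iff k(1) i m(1,2) im by blast
qed

lemma dl_add:
  assumes i: "i \<in> I" and x: "x \<in> carrier (L i)" and y: "y \<in> carrier (L i)"
  shows "dl_in I leq L \<phi> i x \<oplus>\<^bsub>dirlim I leq L \<phi>\<^esub> dl_in I leq L \<phi> i y = dl_in I leq L \<phi> i (x \<oplus>\<^bsub>L i\<^esub> y)"
proof -
  let ?X = "dl_in I leq L \<phi> i x" and ?Y = "dl_in I leq L \<phi> i y"
  let ?P = "\<lambda>Z. \<exists>i x j y k. (i, x) \<in> ?X \<and> (j, y) \<in> ?Y \<and> k \<in> I \<and> leq i k \<and> leq j k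
              \<and> Z = dl_in I leq L \<phi> k (\<phi> i k x \<oplus>\<^bsub>L k\<^esub> \<phi> j k y)"
  have "?X \<oplus>\<^bsub>dirlim I leq L \<phi>\<^esub> ?Y = (SOME Z. ?P Z)" by (simp add: dirlim_def)
  also have "\<dots> = dl_in I leq L \<phi> i (x \<oplus>\<^bsub>L i\<^esub> y)"
  proof (rule someI2[where P = ?P])
    have "dl_in I leq L \<phi> i (x \<oplus>\<^bsub>L i\<^esub> y) = dl_in I leq L \<phi> i (\<phi> i i x \<oplus>\<^bsub>L i\<^esub> \<phi> i i y)"
      using transition_id[OF i] x y by simp
    then show "?P (dl_in I leq L \<phi> i (x \<oplus>\<^bsub>L i\<^esub> y))"
      using mem_dl_in[OF i x] mem_dl_in[OF i y] i leq_refl[OF i] by blast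
  next
    fix Z assume "?P Z"
    then show "Z = dl_in I leq L \<phi> i (x \<oplus>\<^bsub>L i\<^esub> y)"
      using dl_in_add_representatives[OF i x y] by blast
  qed
  finally show ?thesis .
qed

lemma dl_smult:
  assumes i: "i \<in> I" and x: "x \<in> carrier (L i)" and r: "r \<in> carrier R"
  shows "r \<odot>\<^bsub>dirlim I leq L \<phi>\<^esub> dl_in I leq L \<phi> i x = dl_in I leq L \<phi> i (r \<odot>\<^bsub>L i\<^esub> x)"
proof -
  let ?X = "dl_in I leq L \<phi> i x"
  let ?P = "\<lambda>Z. \<exists>i x. (i, x) \<in> ?X \<and> Z = dl_in I leq L \<phi> i (r \<odot>\<^bsub>L i\<^esub> x)"
  have smult: "\<phi> a b (r \<odot>\<^bsub>L a\<^esub> u) = r \<odot>\<^bsub>L b\<^esub> \<phi> a b u"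
    if "a \<in> I" "b \<in> I" "leq a b" "u \<in> carrier (L a)" for a b u
    using transition_hom[OF that(1-3)] that(4) r unfolding mod_hom_def by blast
  have closed: "r \<odot>\<^bsub>L a\<^esub> u \<in> carrier (L a)" if "a \<in> I" "u \<in> carrier (L a)" for a u
    using module.smult_closed[OF stage_module[OF that(1)] r that(2)] .
  have "r \<odot>\<^bsub>dirlim I leq L \<phi>\<^esub> ?X = (SOME Z. ?P Z)" by (simp add: dirlim_def)
  also have "\<dots> = dl_in I leq L \<phi> i (r \<odot>\<^bsub>L i\<^esub> x)"
  proof (rule someI2[where P = ?P])
    show "?P (dl_in I leq L \<phi> i (r \<odot>\<^bsub>L i\<^esub> x))" using mem_dl_in i x by blast
  next
    fix Z assume "?P Z"
    then obtain i' x' where w: "(i', x') \<in> ?X" "Z = dl_in I leq L \<phi> i' (r \<odot>\<^bsub>L i'\<^esub> x')" by blast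
    have i': "i' \<in> I" "x' \<in> carrier (L i')" "?X = dl_in I leq L \<phi> i' x'"
      using dirlim_elem_repr[OF dl_in_in_dirlim[OF i x] w(1)] by blast+
    obtain k where k: "k \<in> I" "leq i k" "leq i' k" "\<phi> i k x = \<phi> i' k x'"
      using dl_in_eq_iff[OF i x i'(1,2)] i'(3) by blast
    then have "\<phi> i' k (r \<odot>\<^bsub>L i'\<^esub> x') = \<phi> i k (r \<odot>\<^bsub>L i\<^esub> x)"
      using smult[OF i k(1,2) x] smult[OF i'(1) k(1,3) i'(2)] by simp
    then show "Z = dl_in I leq L \<phi> i (r \<odot>\<^bsub>L i\<^esub> x)"
      unfolding w(2) using dl_in_eq_iff[OF i'(1) closed[OF i'(1,2)] i closed[OF i x]] k by blast
  qed
  finally show ?thesis .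
qed

lemma dl_zero:
  assumes i: "i \<in> I"
  shows "\<zero>\<^bsub>dirlim I leq L \<phi>\<^esub> = dl_in I leq L \<phi> i \<zero>\<^bsub>L i\<^esub>"
proof -
  define j where "j = (SOME i. i \<in> I)"
  have j: "j \<in> I" unfolding j_def using i by (rule someI)
  obtain k where k: "k \<in> I" "leq i k" "leq j k" using directed[OF i j] by blast
  have "\<phi> j k \<zero>\<^bsub>L j\<^esub> = \<phi> i k \<zero>\<^bsub>L i\<^esub>"
    using mod_hom_zero[OF stage_module[OF i] stage_module[OF k(1)] transition_hom[OF i k(1,2)]]
      mod_hom_zero[OF stage_module[OF j] stage_module[OF k(1)] transition_hom[OF j k(1,3)]] by simp
  then have "dl_in I leq L \<phi> j \<zero>\<^bsub>L j\<^esub> = dl_in I leq L \<phi> i \<zero>\<^bsub>L i\<^esub>"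
    using dl_in_eq_iff[OF j stage_zero_closed[OF j] i stage_zero_closed[OF i]] k by blast
  then show ?thesis by (simp add: dirlim_def j_def Let_def)
qed

end

end

lemma dir_system_imp_direct_system:
  assumes "dir_system R I leq L \<phi>"
  shows "direct_system I leq L \<phi>"
proof
  show "I \<noteq> {}" using assms unfolding dir_system_def by blast
  show "leq i i" if "i \<in> I" for i using assms that unfolding dir_system_def by blast
  show "leq i k" if "i \<in> I" "j \<in> I" "k \<in> I" "leq i j" "leq j k" for i j k
    using assms that unfolding dir_system_def by blast
  show "\<exists>k\<in>I. leq i k \<and> leq j k" if "i \<in> I" "j \<in> I" for i j
    using assms that unfolding dir_system_def by blast
  show "\<phi> i i x = x" if "i \<in> I" "x \<in> carrier (L i)" for i x
    using assms that unfolding dir_system_def by blast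
  show "\<phi> j k (\<phi> i j x) = \<phi> i k x"
    if "i \<in> I" "j \<in> I" "k \<in> I" "leq i j" "leq j k" "x \<in> carrier (L i)" for i j k x
    using assms that unfolding dir_system_def by blast
  show "\<phi> i j x \<in> carrier (L j)" if "i \<in> I" "j \<in> I" "leq i j" "x \<in> carrier (L i)" for i j x
    using assms that unfolding dir_system_def mod_hom_def by blast
qed

lemma direct_system_U:
  assumes pp: "prime p" and ds: "dir_system (Zp_ring p) I leq L \<phi>"
  shows "direct_system I leq (\<lambda>i. U p q (L i)) (\<lambda>i j. Umap p q (\<phi> i j))"
proof -
  interpret L: direct_system I leq L \<phi> using dir_system_imp_direct_system[OF ds] .
  show ?thesis
  proof
    fix i f assume i: "i \<in> I" and f: "f \<in> carrier (U p q (L i))"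
    show "Umap p q (\<phi> i i) f = f"
    proof (rule extensionalityI)
      show "f \<in> extensional (carrier (A_ring p q))" using U_carrierD(1)[OF f] .
      show "Umap p q (\<phi> i i) f t = f t" if "t \<in> carrier (A_ring p q)" for t
        using that L.transition_id[OF i U_carrierD(2)[OF f that]] by (simp add: Umap_def)
    qed (simp add: Umap_def)
  next
    fix i j k f assume ijk: "i \<in> I" "j \<in> I" "k \<in> I" "leq i j" "leq j k" and f: "f \<in> carrier (U p q (L i))"
    show "Umap p q (\<phi> j k) (Umap p q (\<phi> i j) f) = Umap p q (\<phi> i k) f"
      using L.transition_comp[OF ijk U_carrierD(2)[OF f]] by (auto simp: Umap_def intro!: restrict_ext)
  next
    fix i j f assume ij: "i \<in> I" "j \<in> I" "leq i j" and f: "f \<in> carrier (U p q (L i))"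
    obtain n where "vanishes_on_A_filt p q (L i) f n" using U_carrierD(4)[OF f] by blast
    then show "Umap p q (\<phi> i j) f \<in> carrier (U p q (L j))"
      using Umap_closed[OF pp L.stage_module[OF ds ij(1)] L.stage_module[OF ds ij(2)]
          L.transition_hom[OF ds ij] f] by blast
  qed (fact L.index_nonempty L.leq_refl L.leq_trans L.directed)+
qed

context
  fixes p :: nat and q :: int and I :: "'i set" and leq and L :: "'i \<Rightarrow> (rat, 'a) module" and \<phi>
  assumes pp: "prime p" and ds: "dir_system (Zp_ring p) I leq L \<phi>"
begin

interpretation L: direct_system I leq L \<phi>
  using dir_system_imp_direct_system[OF ds] .

interpretation UL: direct_system I leq "\<lambda>i. U p q (L i)" "\<lambda>i j. Umap p q (\<phi> i j)"
  using direct_system_U[OF pp ds] .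

lemma dl_can_dl_in:
  assumes i: "i \<in> I" and f: "f \<in> carrier (U p q (L i))"
  shows "dl_can p q I leq L \<phi> (dl_in I leq (\<lambda>i. U p q (L i)) (\<lambda>i j. Umap p q (\<phi> i j)) i f)
      = (\<lambda>t\<in>carrier (A_ring p q). dl_in I leq L \<phi> i (f t))"
proof -
  let ?X = "dl_in I leq (\<lambda>i. U p q (L i)) (\<lambda>i j. Umap p q (\<phi> i j)) i f"
  have "(SOME jg. jg \<in> ?X) \<in> ?X" using UL.mem_dl_in[OF i f] by (rule someI)
  moreover obtain j g where jg: "(SOME jg. jg \<in> ?X) = (j, g)" by fastforce
  ultimately have j: "j \<in> I" "g \<in> carrier (U p q (L j))"
      "?X = dl_in I leq (\<lambda>i. U p q (L i)) (\<lambda>i j. Umap p q (\<phi> i j)) j g"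
    using UL.dirlim_elem_repr[OF UL.dl_in_in_dirlim[OF i f]] by auto
  obtain k where k: "k \<in> I" "leq i k" "leq j k" "Umap p q (\<phi> i k) f = Umap p q (\<phi> j k) g"
    using UL.dl_in_eq_iff[OF i f j(1,2)] j(3) by blast
  have "dl_in I leq L \<phi> j (g t) = dl_in I leq L \<phi> i (f t)" if t: "t \<in> carrier (A_ring p q)" for t
  proof -
    have "\<phi> i k (f t) = \<phi> j k (g t)" using fun_cong[OF k(4), of t] t by (simp add: Umap_def)
    then show ?thesis
      using L.dl_in_eq_iff[OF i U_carrierD(2)[OF f t] j(1) U_carrierD(2)[OF j(2) t]] k(1-3) by metis
  qed
  then show ?thesis by (simp add: dl_can_def jg cong: restrict_cong)
qed

lemma dl_in_comp_in_U:
  assumes i: "i \<in> I" and f: "f \<in> carrier (U p q (L i))" and fn: "vanishes_on_A_filt p q (L i) f n"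
  shows "(\<lambda>t\<in>carrier (A_ring p q). dl_in I leq L \<phi> i (f t)) \<in> carrier (U p q (dirlim I leq L \<phi>))"
    "vanishes_on_A_filt p q (dirlim I leq L \<phi>) (\<lambda>t\<in>carrier (A_ring p q). dl_in I leq L \<phi> i (f t)) n"
proof -
  let ?G = "\<lambda>t\<in>carrier (A_ring p q). dl_in I leq L \<phi> i (f t)"
  have val: "\<And>a. a \<in> carrier (A_ring p q) \<Longrightarrow> f a \<in> carrier (L i)" and lin: "A_linear p q (L i) f"
    using U_carrierD[OF f] by blast+
  have "?G (a \<oplus>\<^bsub>A_ring p q\<^esub> b) = ?G a \<oplus>\<^bsub>dirlim I leq L \<phi>\<^esub> ?G b"
    if ab: "a \<in> carrier (A_ring p q)" "b \<in> carrier (A_ring p q)" for a b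
    using L.dl_add[OF ds i val val] lin ab A_ring_add_closed[OF pp ab] by (simp add: A_linear_def)
  moreover have "?G (A_scal r a) = r \<odot>\<^bsub>dirlim I leq L \<phi>\<^esub> ?G a"
    if ra: "r \<in> Zp_set p" "a \<in> carrier (A_ring p q)" for r a
    using L.dl_smult[OF ds i val[OF ra(2)]] lin ra A_scal_closed[OF pp ra]
    by (simp add: A_linear_def Zp_ring_simps)
  ultimately have "A_linear p q (dirlim I leq L \<phi>) ?G" by (simp add: A_linear_def)
  moreover show "vanishes_on_A_filt p q (dirlim I leq L \<phi>) ?G n"
    using fn L.dl_zero[OF ds i] by (simp add: vanishes_on_A_filt_def A_filt_def)
  ultimately show "?G \<in> carrier (U p q (dirlim I leq L \<phi>))"
    using L.dl_in_in_dirlim[OF i val] by (auto simp: U_carrier_iff)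
qed

lemma dl_can_inj:
  "inj_on (dl_can p q I leq L \<phi>) (carrier (dirlim I leq (\<lambda>i. U p q (L i)) (\<lambda>i j. Umap p q (\<phi> i j))))"
proof (rule inj_onI)
  fix X Y
  assume X: "X \<in> carrier (dirlim I leq (\<lambda>i. U p q (L i)) (\<lambda>i j. Umap p q (\<phi> i j)))"
    and Y: "Y \<in> carrier (dirlim I leq (\<lambda>i. U p q (L i)) (\<lambda>i j. Umap p q (\<phi> i j)))"
    and eq: "dl_can p q I leq L \<phi> X = dl_can p q I leq L \<phi> Y"
  obtain i f where f: "i \<in> I" "f \<in> carrier (U p q (L i))"
      "X = dl_in I leq (\<lambda>i. U p q (L i)) (\<lambda>i j. Umap p q (\<phi> i j)) i f"
    using UL.dirlim_elem_cases[OF X] .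
  obtain j g where g: "j \<in> I" "g \<in> carrier (U p q (L j))"
      "Y = dl_in I leq (\<lambda>i. U p q (L i)) (\<lambda>i j. Umap p q (\<phi> i j)) j g"
    using UL.dirlim_elem_cases[OF Y] .
  obtain n where fn: "vanishes_on_A_filt p q (L i) f n" and gn: "vanishes_on_A_filt p q (L j) g n"
    using U_common_vanishing_level[OF f(2) g(2)] .
  have "dl_in I leq L \<phi> i (f (Phi m)) = dl_in I leq L \<phi> j (g (Phi m))" for m
    using fun_cong[OF eq, of "Phi m"] Phi_in_A_ring[OF pp]
    unfolding f(3) g(3) dl_can_dl_in[OF f(1,2)] dl_can_dl_in[OF g(1,2)] by simp
  then have "\<exists>K\<in>I. leq i K \<and> leq j K \<and> (\<forall>m\<in>{..<n}. \<phi> i K (f (Phi m)) = \<phi> j K (g (Phi m)))"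
    using f(1) g(1) U_carrierD(2)[OF f(2) Phi_in_A_ring[OF pp]] U_carrierD(2)[OF g(2) Phi_in_A_ring[OF pp]]
    by (intro L.dl_in_eq_at_common_stage) auto
  then obtain K where K: "K \<in> I" "leq i K" "leq j K" "\<forall>m<n. \<phi> i K (f (Phi m)) = \<phi> j K (g (Phi m))"
    by auto
  have "Umap p q (\<phi> i K) f = Umap p q (\<phi> j K) g"
  proof (rule U_eqI[OF pp])
    show "Umap p q (\<phi> i K) f \<in> carrier (U p q (L K))" "vanishes_on_A_filt p q (L K) (Umap p q (\<phi> i K) f) n"
      using Umap_closed[OF pp L.stage_module[OF ds f(1)] L.stage_module[OF ds K(1)]
          L.transition_hom[OF ds f(1) K(1,2)] f(2) fn] by blast+
    show "Umap p q (\<phi> j K) g \<in> carrier (U p q (L K))" "vanishes_on_A_filt p q (L K) (Umap p q (\<phi> j K) g) n"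
      using Umap_closed[OF pp L.stage_module[OF ds g(1)] L.stage_module[OF ds K(1)]
          L.transition_hom[OF ds g(1) K(1,3)] g(2) gn] by blast+
    show "Umap p q (\<phi> i K) f (Phi m) = Umap p q (\<phi> j K) g (Phi m)" if "m < n" for m
      using K(4) that Phi_in_A_ring[OF pp] by (simp add: Umap_def)
  qed
  then show "X = Y" unfolding f(3) g(3) using UL.dl_in_eq_iff[OF f(1,2) g(1,2)] K(1-3) by blast
qed

lemma dl_can_surj:
  assumes F: "F \<in> carrier (U p q (dirlim I leq L \<phi>))"
  shows "F \<in> dl_can p q I leq L \<phi> ` carrier (dirlim I leq (\<lambda>i. U p q (L i)) (\<lambda>i j. Umap p q (\<phi> i j)))"
proof -
  obtain n where Fn: "vanishes_on_A_filt p q (dirlim I leq L \<phi>) F n" using U_carrierD(4)[OF F] by blast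
  have "\<exists>K\<in>I. \<exists>y. \<forall>m\<in>{..<n}. y m \<in> carrier (L K) \<and> F (Phi m) = dl_in I leq L \<phi> K (y m)"
    using L.dirlim_finite_family_from_stage[of "{..<n}" "\<lambda>m. F (Phi m)"]
      U_carrierD(2)[OF F Phi_in_A_ring[OF pp]] by simp
  then obtain K y where K: "K \<in> I" and y: "\<forall>m<n. y m \<in> carrier (L K) \<and> F (Phi m) = dl_in I leq L \<phi> K (y m)"
    by auto
  have yn: "\<And>m. m < n \<Longrightarrow> y m \<in> carrier (L K)" using y by blast
  let ?\<psi> = "U_of_values p q (L K) n y"
  have \<psi>: "?\<psi> \<in> carrier (U p q (L K))" "vanishes_on_A_filt p q (L K) ?\<psi> n"
    using U_of_values(1,2)[where x = y, OF pp L.stage_module[OF ds K] yn] by blast+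
  have "(\<lambda>t\<in>carrier (A_ring p q). dl_in I leq L \<phi> K (?\<psi> t)) = F"
  proof (rule U_eqI[OF pp dl_in_comp_in_U(1)[OF K \<psi>] F dl_in_comp_in_U(2)[OF K \<psi>] Fn])
    show "(\<lambda>t\<in>carrier (A_ring p q). dl_in I leq L \<phi> K (?\<psi> t)) (Phi m) = F (Phi m)" if "m < n" for m
      using U_of_values(3)[where x = y, OF pp L.stage_module[OF ds K] yn that] y that
        Phi_in_A_ring[OF pp] by simp
  qed
  then have "dl_can p q I leq L \<phi> (dl_in I leq (\<lambda>i. U p q (L i)) (\<lambda>i j. Umap p q (\<phi> i j)) K ?\<psi>) = F"
    using dl_can_dl_in[OF K \<psi>(1)] by simp
  then show ?thesis using UL.dl_in_in_dirlim[OF K \<psi>(1)] by blast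
qed

lemma U_dirlim_bij:
  "bij_betw (dl_can p q I leq L \<phi>)
     (carrier (dirlim I leq (\<lambda>i. U p q (L i)) (\<lambda>i j. Umap p q (\<phi> i j))))
     (carrier (U p q (dirlim I leq L \<phi>)))"
  unfolding bij_betw_def
proof (intro conjI equalityI subsetI)
  show "inj_on (dl_can p q I leq L \<phi>) (carrier (dirlim I leq (\<lambda>i. U p q (L i)) (\<lambda>i j. Umap p q (\<phi> i j))))"
    by (rule dl_can_inj)
  fix G
  assume "G \<in> dl_can p q I leq L \<phi> ` carrier (dirlim I leq (\<lambda>i. U p q (L i)) (\<lambda>i j. Umap p q (\<phi> i j)))"
  then obtain X where X: "X \<in> carrier (dirlim I leq (\<lambda>i. U p q (L i)) (\<lambda>i j. Umap p q (\<phi> i j)))"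
    and G: "G = dl_can p q I leq L \<phi> X" by blast
  obtain i f where f: "i \<in> I" "f \<in> carrier (U p q (L i))"
    and "X = dl_in I leq (\<lambda>i. U p q (L i)) (\<lambda>i j. Umap p q (\<phi> i j)) i f"
    using UL.dirlim_elem_cases[OF X] .
  then have "G = (\<lambda>t\<in>carrier (A_ring p q). dl_in I leq L \<phi> i (f t))" using G dl_can_dl_in by simp
  moreover obtain n where "vanishes_on_A_filt p q (L i) f n" using U_carrierD(4)[OF f(2)] by blast
  ultimately show "G \<in> carrier (U p q (dirlim I leq L \<phi>))" using dl_in_comp_in_U(1)[OF f] by simp
qed (rule dl_can_surj)

end

theorem theorem5p5:
  fixes p :: nat and q :: int
  assumes "prime p" and "odd p"
    and "residue_primroot (p ^ 2) (nat (q mod int (p ^ 2)))"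
  shows
    \<comment> \<open>exactness\<close>
    "(\<forall>(L1 :: (rat, 'a) module) (L2 :: (rat, 'b) module) (L3 :: (rat, 'c) module) f g.
        module (Zp_ring p) L1 \<and> module (Zp_ring p) L2 \<and> module (Zp_ring p) L3
        \<and> f \<in> mod_hom (Zp_ring p) L1 L2 \<and> g \<in> mod_hom (Zp_ring p) L2 L3
        \<and> f ` carrier L1 = {y \<in> carrier L2. g y = \<zero>\<^bsub>L3\<^esub>}
        \<longrightarrow> Umap p q f ` carrier (U p q L1)
              = {\<psi> \<in> carrier (U p q L2). Umap p q g \<psi> = \<zero>\<^bsub>U p q L3\<^esub>})
    \<comment> \<open>direct sums: the canonical map from the sum of the U L_i to U of the sum is bijective\<close>
   \<and> (\<forall>(I :: 'i set) (L :: 'i \<Rightarrow> (rat, 'd) module).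
        (\<forall>i\<in>I. module (Zp_ring p) (L i)) \<longrightarrow>
        bij_betw (\<lambda>\<Phi>. \<lambda>t\<in>carrier (A_ring p q). \<lambda>i\<in>I. \<Phi> i t)
          (carrier (dsum I (\<lambda>i. U p q (L i)))) (carrier (U p q (dsum I L))))
    \<comment> \<open>direct limits: the canonical map colim U L_i to U (colim L_i) is bijective\<close>
   \<and> (\<forall>(I :: 'j set) leq (L :: 'j \<Rightarrow> (rat, 'e) module) \<phi>.
        dir_system (Zp_ring p) I leq L \<phi> \<longrightarrow>
        bij_betw (dl_can p q I leq L \<phi>)
          (carrier (dirlim I leq (\<lambda>i. U p q (L i)) (\<lambda>i j. Umap p q (\<phi> i j))))
          (carrier (U p q (dirlim I leq L \<phi>))))"
proof (intro conjI allI impI)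
  fix L1 :: "(rat, 'a) module" and L2 :: "(rat, 'b) module" and L3 :: "(rat, 'c) module" and f g
  assume "module (Zp_ring p) L1 \<and> module (Zp_ring p) L2 \<and> module (Zp_ring p) L3
    \<and> f \<in> mod_hom (Zp_ring p) L1 L2 \<and> g \<in> mod_hom (Zp_ring p) L2 L3
    \<and> f ` carrier L1 = {y \<in> carrier L2. g y = \<zero>\<^bsub>L3\<^esub>}"
  then show "Umap p q f ` carrier (U p q L1) = {\<psi> \<in> carrier (U p q L2). Umap p q g \<psi> = \<zero>\<^bsub>U p q L3\<^esub>}"
    by (elim conjE) (rule Umap_exact[OF assms(1)])
next
  fix I :: "'i set" and L :: "'i \<Rightarrow> (rat, 'd) module"
  assume L: "\<forall>i\<in>I. module (Zp_ring p) (L i)"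
  show "bij_betw (\<lambda>\<Phi>. \<lambda>t\<in>carrier (A_ring p q). \<lambda>i\<in>I. \<Phi> i t)
      (carrier (dsum I (\<lambda>i. U p q (L i)))) (carrier (U p q (dsum I L)))"
    by (rule U_dsum_bij[OF assms(1)]) (use L in blast)
qed (rule U_dirlim_bij[OF assms(1)])

end
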